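(* Let $n\ge2$, let $\mathbf{x}=(x_1,\dots,x_n)^T\in\mathbb{C}^n$ with $x_i\neq x_j$ for all $i\neq j$, and let $F$ and $A^{(k)}(\mathbf{x})$ be as in the context. Then for each $k\in\{1,\dots,n\}$ the matrix $M^{(k)}:=F'(\mathbf{x})^{-1}A^{(k)}(\mathbf{x})$ has entries \[ M^{(k)}_{jl}=\begin{cases} \dfrac{1}{x_k-x_j}, & j=l\neq k,\\[2ex] \dfrac{1}{x_l-x_k}, & j=k,\ l\neq k,\\[2ex] 0, & \text{otherwise (in particular } M^{(k)}_{kk}=0\text{)}. \end{cases} \]
   Context: Let $p(t)=t^n+a_{n-1}t^{n-1}+\dots+a_1t+a_0$ be a monic polynomial of degree $n$ with real coefficients, and set $\mathbf{a}=(a_0,a_1,\dots,a_{n-1})^T$. Define $V=(v_1,\dots,v_n)^T:\mathbb{C}^n\to\mathbb{C}^n$ by \[ v_{n-\nu+1}(\mathbf{x})=\sum_{i_1<i_2<\dots<i_\nu}(-x_{i_1})(-x_{i_2})\cdots(-x_{i_\nu}),\qquad \nu=1,\dots,n, \] (the sum running over all $\nu$-element index sets $\{i_1<\dots<i_\nu\}\subseteq\{1,\dots,n\}$), so that $\prod_{j=1}^n(t-x_j)=t^n+\sum_{j=0}^{n-1}v_{j+1}(\mathbf{x})t^j$. Define $F=(f_1,\dots,f_n)^T:\mathbb{C}^n\to\mathbb{C}^n$ by $F(\mathbf{x})=V(\mathbf{x})-\mathbf{a}$, with Jacobian $F'(\mathbf{x})$ (invertible when the $x_i$ are pairwise distinct).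 For $k=1,\dots,n$, $A^{(k)}(\mathbf{x})\in\mathbb{C}^{n\times n}$ is the matrix whose $(i,l)$ entry is $\partial^2 f_i(\mathbf{x})/\partial x_l\partial x_k$. *)

theory Defs
  imports "HOL-Analysis.Analysis" "Jordan_Normal_Form.Gauss_Jordan_Elimination"
begin

text \<open>Indices are shifted to 0-based: x i for i < n stands for x_(i+1).
  Vcoef n x i (i < n) is the coefficient of t^i in prod_(j<n) (t - x j), i.e. v_(i+1)(x):
  v_(n-nu+1) = sum over nu-element index sets of prod (- x_s), with i = n - nu.\<close>

definition Vcoef :: "nat \<Rightarrow> (nat \<Rightarrow> complex) \<Rightarrow> nat \<Rightarrow> complex" where
  "Vcoef n x i = (\<Sum>S\<in>{S. S \<subseteq> {..<n} \<and> card S = n - i}. \<Prod>s\<in>S. - x s)"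

definition Ffun :: "nat \<Rightarrow> (nat \<Rightarrow> real) \<Rightarrow> (nat \<Rightarrow> complex) \<Rightarrow> nat \<Rightarrow> complex" where
  "Ffun n a x i = Vcoef n x i - complex_of_real (a i)"

definition partial :: "nat \<Rightarrow> ((nat \<Rightarrow> complex) \<Rightarrow> complex) \<Rightarrow> (nat \<Rightarrow> complex) \<Rightarrow> complex" where
  "partial l g x = deriv (\<lambda>t. g (x(l := t))) (x l)"

definition jacF :: "nat \<Rightarrow> (nat \<Rightarrow> real) \<Rightarrow> (nat \<Rightarrow> complex) \<Rightarrow> complex mat" where
  "jacF n a x = mat n n (\<lambda>(i, l). partial l (\<lambda>y. Ffun n a y i) x)"

definition hessA :: "nat \<Rightarrow> (nat \<Rightarrow> real) \<Rightarrow> nat \<Rightarrow> (nat \<Rightarrow> complex) \<Rightarrow> complex mat" where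
  "hessA n a k x = mat n n (\<lambda>(i, l). partial l (\<lambda>y. partial k (\<lambda>z. Ffun n a z i) y) x)"

end

theory Submission
  imports Defs "Jordan_Normal_Form.Determinant"
begin

text \<open>For a set S of indices let p_S(t) be the product of t - x_i over the indices i not in S.
  Each coefficient of p_{} is affine in every single variable x_l, with slope minus the next lower
  coefficient of p_{l}. So the columns of the Jacobian are the coefficient vectors of the -p_{l},
  and its inverse is read off from the Lagrange identities p_{l}(x_j) = 0 for j \<noteq> l. Likewise
  the columns of A^(k) are the coefficient vectors of the p_{k,l}, and the partial fraction identity
  (x_k - x_l) p_{k,l} = p_{k} - p_{l} expresses each of them through just two columns of the
  Jacobian; this is the sparsity pattern of F'(x)^-1 A^(k).\<close>

definition signed_esym :: "'b set \<Rightarrow> ('b \<Rightarrow> 'a :: comm_ring_1) \<Rightarrow> nat \<Rightarrow> 'a" where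
  "signed_esym T x m = (\<Sum>S\<in>{S. S \<subseteq> T \<and> card S = m}. \<Prod>s\<in>S. - x s)"

lemma Vcoef_eq_signed_esym: "Vcoef n x i = signed_esym {..<n} x (n - i)"
  by (simp add: Vcoef_def signed_esym_def)

lemma signed_esym_cong: "(\<And>s. s \<in> T \<Longrightarrow> x s = y s) \<Longrightarrow> signed_esym T x m = signed_esym T y m"
  unfolding signed_esym_def by (intro sum.cong prod.cong) auto

lemma signed_esym_empty: "signed_esym {} x m = (if m = 0 then 1 else 0)"
proof -
  have subsets: "{S. S \<subseteq> {} \<and> card S = m} = (if m = 0 then {{}} else {})" by auto
  show ?thesis unfolding signed_esym_def subsets by simp
qed

lemma signed_esym_card_less: "finite T \<Longrightarrow> card T < m \<Longrightarrow> signed_esym T x m = 0"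
proof -
  assume "finite T" "card T < m"
  then have subsets: "{S. S \<subseteq> T \<and> card S = m} = {}"
    using card_mono[OF \<open>finite T\<close>] by (metis (mono_tags, lifting) empty_Collect_eq leD)
  show ?thesis unfolding signed_esym_def subsets by simp
qed

lemma subsets_card_0: "finite T \<Longrightarrow> {S. S \<subseteq> T \<and> card S = 0} = {{}}"
  by (auto dest: finite_subset)

lemma subsets_card_insert:
  assumes "finite T" "l \<notin> T" "m > 0"
  shows "{S. S \<subseteq> insert l T \<and> card S = m} =
    {S. S \<subseteq> T \<and> card S = m} \<union> insert l ` {S. S \<subseteq> T \<and> card S = m - 1}"
proof (rule Set.set_eqI, rule iffI)
  fix S assume S: "S \<in> {S. S \<subseteq> insert l T \<and> card S = m}"
  show "S \<in> {S. S \<subseteq> T \<and> card S = m} \<union> insert l ` {S. S \<subseteq> T \<and> card S = m - 1}"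
  proof (cases "l \<in> S")
    case True
    then have "S = insert l (S - {l})" "S - {l} \<in> {S. S \<subseteq> T \<and> card S = m - 1}"
      using S assms by (auto simp: card_Diff_singleton)
    then show ?thesis by blast
  qed (use S in auto)
next
  fix S assume "S \<in> {S. S \<subseteq> T \<and> card S = m} \<union> insert l ` {S. S \<subseteq> T \<and> card S = m - 1}"
  then show "S \<in> {S. S \<subseteq> insert l T \<and> card S = m}"
    using assms finite_subset[of _ T] by (auto simp: card_insert_if)
qed

lemma signed_esym_insert:
  assumes T: "finite T" "l \<notin> T"
  shows "signed_esym (insert l T) x m =
    signed_esym T x m + (if m = 0 then 0 else - x l * signed_esym T x (m - 1))"
proof (cases "m = 0")
  case True
  then show ?thesis using T by (simp add: signed_esym_def subsets_card_0)
next
  case False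
  then have "m > 0" by simp
  define B where "B = {S. S \<subseteq> T \<and> card S = m - 1}"
  have fin_B: "finite B" and inj: "inj_on (insert l) B" and l_notin: "\<And>R. R \<in> B \<Longrightarrow> l \<notin> R \<and> finite R"
    using T by (auto simp: B_def inj_on_def dest: finite_subset)
  have "signed_esym (insert l T) x m =
      signed_esym T x m + (\<Sum>S\<in>insert l ` B. \<Prod>s\<in>S. - x s)"
    unfolding signed_esym_def subsets_card_insert[OF T \<open>m > 0\<close>] B_def[symmetric]
    by (rule sum.union_disjoint) (use T fin_B in \<open>auto simp: B_def\<close>)
  also have "(\<Sum>S\<in>insert l ` B. \<Prod>s\<in>S. - x s) = (\<Sum>R\<in>B. - x l * (\<Prod>s\<in>R. - x s))"
    by (simp add: sum.reindex[OF inj] l_notin cong: sum.cong)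
  finally show ?thesis using False by (simp add: signed_esym_def B_def sum_distrib_left)
qed

lemma signed_esym_update_notin: "l \<notin> T \<Longrightarrow> signed_esym T (x(l := t)) m = signed_esym T x m"
  by (rule signed_esym_cong) auto

lemma signed_esym_update_in:
  assumes "finite T" "l \<in> T"
  shows "signed_esym T (x(l := t)) m =
    signed_esym (T - {l}) x m + t * (if m = 0 then 0 else - signed_esym (T - {l}) x (m - 1))"
proof -
  have "T = insert l (T - {l})" using assms by auto
  then have "signed_esym T (x(l := t)) m = signed_esym (insert l (T - {l})) (x(l := t)) m" by simp
  also have "\<dots> = signed_esym (T - {l}) x m + t * (if m = 0 then 0 else - signed_esym (T - {l}) x (m - 1))"
    using assms by (subst signed_esym_insert) (auto simp: signed_esym_update_notin)
  finally show ?thesis .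
qed

lemma prod_diff_eq_signed_esym:
  assumes "finite U"
  shows "(\<Prod>s\<in>U. t - x s) = (\<Sum>i\<le>card U. t ^ i * signed_esym U x (card U - i))"
  using assms
proof (induction U rule: finite_induct)
  case empty
  then show ?case by (simp add: signed_esym_empty)
next
  case (insert a U)
  define N where "N = card U"
  define S where "S = (\<Sum>i\<le>N. t ^ i * signed_esym U x (N - i))"
  have "(\<Sum>i\<le>Suc N. t ^ i * signed_esym (insert a U) x (Suc N - i))
     = (\<Sum>i\<le>Suc N. t ^ i * signed_esym U x (Suc N - i)) +
       (\<Sum>i\<le>Suc N. t ^ i * (if Suc N - i = 0 then 0 else - x a * signed_esym U x (Suc N - i - 1)))"
    by (simp add: signed_esym_insert insert distrib_left sum.distrib)
  also have "(\<Sum>i\<le>Suc N. t ^ i * signed_esym U x (Suc N - i)) = t * S"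
    unfolding S_def sum.atMost_Suc_shift using insert N_def
    by (simp add: signed_esym_card_less sum_distrib_left mult.assoc)
  also have "(\<Sum>i\<le>Suc N. t ^ i * (if Suc N - i = 0 then 0 else - x a * signed_esym U x (Suc N - i - 1)))
     = - x a * S"
    unfolding S_def sum.atMost_Suc sum_distrib_left by (auto intro!: sum.cong simp: Suc_diff_le)
  finally show ?case using insert by (simp add: S_def N_def algebra_simps)
qed

lemma signed_esym_partial_fraction:
  fixes x :: "'b \<Rightarrow> 'a :: field"
  assumes "finite U" "k \<notin> U" "l \<notin> U" "x k \<noteq> x l"
  shows "- signed_esym (insert k U) x p / (x k - x l) + - signed_esym (insert l U) x p / (x l - x k)
    = (if p = 0 then 0 else signed_esym U x (p - 1))"
proof -
  have "- (A - x k * C) / (x k - x l) + - (A - x l * C) / (x l - x k) = C" for A C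
  proof -
    have "x l - x k = - (x k - x l)" by simp
    then have "- (A - x k * C) / (x k - x l) + - (A - x l * C) / (x l - x k) = C * (x k - x l) / (x k - x l)"
      by (simp only: divide_minus_right) (simp add: diff_divide_distrib[symmetric] algebra_simps)
    then show ?thesis using assms(4) by simp
  qed
  from this[of "signed_esym U x p" "if p = 0 then 0 else signed_esym U x (p - 1)"] show ?thesis
    using assms by (cases "p = 0") (simp_all add: signed_esym_insert)
qed

lemma partial_affine:
  assumes "\<And>t. g (x(l := t)) = c + t * d"
  shows "partial l g x = d"
proof -
  have "(\<lambda>t. g (x(l := t))) = (\<lambda>t. c + t * d)" using assms by auto
  moreover have "deriv (\<lambda>t. c + t * d) (x l) = d"
    by (rule DERIV_imp_deriv) (auto intro!: derivative_eq_intros)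
  ultimately show ?thesis unfolding partial_def by simp
qed

lemma partial_Ffun:
  assumes "l < n" "i < n"
  shows "partial l (\<lambda>y. Ffun n a y i) y = - signed_esym ({..<n} - {l}) y (n - i - 1)"
  by (rule partial_affine[where c = "signed_esym ({..<n} - {l}) y (n - i) - complex_of_real (a i)"])
     (use assms in \<open>simp add: Ffun_def Vcoef_eq_signed_esym signed_esym_update_in\<close>)

lemma partial_partial_Ffun:
  assumes "k < n" "l < n" "i < n"
  shows "partial l (\<lambda>y. partial k (\<lambda>z. Ffun n a z i) y) x =
    (if l = k \<or> n - i - 1 = 0 then 0 else signed_esym ({..<n} - {k} - {l}) x (n - i - 2))"
proof -
  have inner: "(\<lambda>y. partial k (\<lambda>z. Ffun n a z i) y) = (\<lambda>y. - signed_esym ({..<n} - {k}) y (n - i - 1))"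
    using assms by (simp add: partial_Ffun)
  show ?thesis
  proof (cases "l = k")
    case True
    then show ?thesis unfolding inner
      by (intro partial_affine[where c = "- signed_esym ({..<n} - {k}) x (n - i - 1)"])
         (simp add: signed_esym_update_notin)
  next
    case False
    then show ?thesis unfolding inner using assms
      by (intro partial_affine[where c = "- signed_esym ({..<n} - {k} - {l}) x (n - i - 1)"])
         (auto simp: signed_esym_update_in diff_diff_eq)
  qed
qed

definition jac_mat :: "nat \<Rightarrow> (nat \<Rightarrow> complex) \<Rightarrow> complex mat" where
  "jac_mat n x = mat n n (\<lambda>(i, l). - signed_esym ({..<n} - {l}) x (n - i - 1))"

definition hess_mat :: "nat \<Rightarrow> nat \<Rightarrow> (nat \<Rightarrow> complex) \<Rightarrow> complex mat" where
  "hess_mat n k x = mat n n (\<lambda>(i, l).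
     if l = k \<or> n - i - 1 = 0 then 0 else signed_esym ({..<n} - {k} - {l}) x (n - i - 2))"

text \<open>Row \<open>j\<close> evaluates a coefficient vector at \<open>x\<^sub>j\<close> and divides by \<open>-\<Prod>\<^sub>s\<^sub>\<noteq>\<^sub>j(x\<^sub>j - x\<^sub>s)\<close>.\<close>
definition jac_inv_mat :: "nat \<Rightarrow> (nat \<Rightarrow> complex) \<Rightarrow> complex mat" where
  "jac_inv_mat n x = mat n n (\<lambda>(j, i). - (x j ^ i) / (\<Prod>s\<in>{..<n} - {j}. x j - x s))"

definition jac_inv_hess_mat :: "nat \<Rightarrow> nat \<Rightarrow> (nat \<Rightarrow> complex) \<Rightarrow> complex mat" where
  "jac_inv_hess_mat n k x = mat n n (\<lambda>(j, l).
     if j = l \<and> l \<noteq> k then 1 / (x k - x j)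
     else if j = k \<and> l \<noteq> k then 1 / (x l - x k) else 0)"

lemma jacF_eq_jac_mat: "jacF n a x = jac_mat n x"
  unfolding jacF_def jac_mat_def by (rule eq_matI) (auto simp: partial_Ffun)

lemma hessA_eq_hess_mat: "k < n \<Longrightarrow> hessA n a k x = hess_mat n k x"
  unfolding hessA_def hess_mat_def by (rule eq_matI) (auto simp: partial_partial_Ffun)

lemma jac_inv_mat_mult_jac_mat:
  assumes distinct: "\<forall>i<n. \<forall>j<n. i \<noteq> j \<longrightarrow> x i \<noteq> x j"
  shows "jac_inv_mat n x * jac_mat n x = 1\<^sub>m n"
proof (rule eq_matI)
  fix j l assume "j < dim_row (1\<^sub>m n :: complex mat)" "l < dim_col (1\<^sub>m n :: complex mat)"
  then have j: "j < n" and l: "l < n" by auto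
  define P where "P = (\<Prod>s\<in>{..<n} - {j}. x j - x s)"
  have "P \<noteq> 0" using distinct j by (simp add: P_def)
  have "{..<n} = {..n - 1}" using j by auto
  then have "(jac_inv_mat n x * jac_mat n x) $$ (j, l)
      = (\<Sum>i\<le>n - 1. x j ^ i * signed_esym ({..<n} - {l}) x (n - 1 - i)) / P"
    using j l by (simp add: jac_inv_mat_def jac_mat_def P_def scalar_prod_def
        lessThan_atLeast0[symmetric] sum_divide_distrib diff_diff_eq)
  also have "\<dots> = (\<Prod>s\<in>{..<n} - {l}. x j - x s) / P"
    using prod_diff_eq_signed_esym[of "{..<n} - {l}" "x j" x] l by simp
  also have "\<dots> = (if j = l then 1 else 0)"
    using \<open>P \<noteq> 0\<close> j by (auto simp: P_def intro: prod_zero)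
  finally show "(jac_inv_mat n x * jac_mat n x) $$ (j, l) = 1\<^sub>m n $$ (j, l)" using j l by simp
qed (auto simp: jac_inv_mat_def jac_mat_def)

lemma jac_mat_mult_jac_inv_hess_mat:
  assumes distinct: "\<forall>i<n. \<forall>j<n. i \<noteq> j \<longrightarrow> x i \<noteq> x j" and k: "k < n"
  shows "jac_mat n x * jac_inv_hess_mat n k x = hess_mat n k x"
proof (rule eq_matI)
  fix i l assume "i < dim_row (hess_mat n k x)" "l < dim_col (hess_mat n k x)"
  then have i: "i < n" and l: "l < n" by (auto simp: hess_mat_def)
  let ?J = "jac_mat n x"
  show "(?J * jac_inv_hess_mat n k x) $$ (i, l) = hess_mat n k x $$ (i, l)"
  proof (cases "l = k")
    case True
    then show ?thesis using i l by (simp add: jac_mat_def jac_inv_hess_mat_def hess_mat_def scalar_prod_def)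
  next
    case False
    define U where "U = {..<n} - {k} - {l}"
    have U: "finite U" "k \<notin> U" "l \<notin> U" "{..<n} - {l} = insert k U" "{..<n} - {k} = insert l U"
      using k l False by (auto simp: U_def)
    have "(?J * jac_inv_hess_mat n k x) $$ (i, l)
        = (\<Sum>j<n. (if j = l then ?J $$ (i, l) / (x k - x l) else 0) +
                  (if j = k then ?J $$ (i, k) / (x l - x k) else 0))"
      using i l k False
      by (auto simp: jac_mat_def jac_inv_hess_mat_def scalar_prod_def lessThan_atLeast0 intro!: sum.cong)
    also have "\<dots> = ?J $$ (i, l) / (x k - x l) + ?J $$ (i, k) / (x l - x k)"
      using l k by (simp add: sum.distrib)
    also have "\<dots> = - signed_esym (insert k U) x (n - i - 1) / (x k - x l)
        + - signed_esym (insert l U) x (n - i - 1) / (x l - x k)"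
      using i k l by (simp add: jac_mat_def U(4,5))
    also have "\<dots> = hess_mat n k x $$ (i, l)"
      using signed_esym_partial_fraction[OF U(1-3), of x "n - i - 1"] distinct i k l False
      by (simp add: hess_mat_def U_def diff_diff_eq)
    finally show ?thesis .
  qed
qed (auto simp: jac_mat_def jac_inv_hess_mat_def hess_mat_def)

lemma mat_inverse_left_inverse:
  fixes A B :: "'a :: field mat"
  assumes A: "A \<in> carrier_mat n n" and B: "B \<in> carrier_mat n n" and BA: "B * A = 1\<^sub>m n"
  shows "mat_inverse A = Some B"
proof -
  have AB: "A * B = 1\<^sub>m n" by (rule mat_mult_left_right_inverse[OF B A BA])
  then have "A \<in> Units (ring_mat TYPE('a) n undefined)"
    using A B BA unfolding Units_def ring_mat_def by auto
  then obtain C where C: "mat_inverse A = Some C"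
    using mat_inverse(1)[OF A, of undefined] by (cases "mat_inverse A") auto
  with mat_inverse(2)[OF A] have "C * A = 1\<^sub>m n" "C \<in> carrier_mat n n" by auto
  then have "C = C * (A * B)" by (simp add: AB)
  also have "\<dots> = B" using \<open>C * A = 1\<^sub>m n\<close> A B \<open>C \<in> carrier_mat n n\<close> by (simp add: assoc_mult_mat[symmetric])
  finally show ?thesis using C by simp
qed

theorem mainTheorem5:
  fixes n :: nat and a :: "nat \<Rightarrow> real" and x :: "nat \<Rightarrow> complex"
  assumes "n \<ge> 2"
    and "\<forall>i<n. \<forall>j<n. i \<noteq> j \<longrightarrow> x i \<noteq> x j"
  shows "\<exists>Jinv. mat_inverse (jacF n a x) = Some Jinv \<and>
    (\<forall>k<n. \<forall>j<n. \<forall>l<n.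
       (Jinv * hessA n a k x) $$ (j, l) =
         (if j = l \<and> l \<noteq> k then 1 / (x k - x j)
          else if j = k \<and> l \<noteq> k then 1 / (x l - x k)
          else 0))"
proof (intro exI conjI allI impI)
  let ?J = "jac_mat n x" and ?B = "jac_inv_mat n x"
  have carrier: "?J \<in> carrier_mat n n" "?B \<in> carrier_mat n n" "jac_inv_hess_mat n k x \<in> carrier_mat n n" for k
    by (auto simp: jac_mat_def jac_inv_mat_def jac_inv_hess_mat_def)
  have BJ: "?B * ?J = 1\<^sub>m n" using assms(2) by (rule jac_inv_mat_mult_jac_mat)
  then show "mat_inverse (jacF n a x) = Some ?B"
    unfolding jacF_eq_jac_mat using carrier by (intro mat_inverse_left_inverse)
  fix k j l assume "k < n" "j < n" "l < n"
  have "?B * hessA n a k x = ?B * (?J * jac_inv_hess_mat n k x)"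
    using \<open>k < n\<close> assms(2) by (simp add: hessA_eq_hess_mat jac_mat_mult_jac_inv_hess_mat)
  also have "\<dots> = (?B * ?J) * jac_inv_hess_mat n k x"
    using assoc_mult_mat[OF carrier(2,1,3)] by simp
  finally have "?B * hessA n a k x = jac_inv_hess_mat n k x"
    using BJ left_mult_one_mat[OF carrier(3)] by simp
  then show "(?B * hessA n a k x) $$ (j, l) =
      (if j = l \<and> l \<noteq> k then 1 / (x k - x j) else if j = k \<and> l \<noteq> k then 1 / (x l - x k) else 0)"
    using \<open>j < n\<close> \<open>l < n\<close> by (simp add: jac_inv_hess_mat_def)
qed

end
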